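(* Fix an integer $m\ge 1$ and $n\ge 0$. Let $\pi\in\Pi^{(m)}_n$ with label $L(\pi)=(a_1,a_2,\dots,a_m)$. Then exactly $a_m$ partitions of $[n+1]$ lying in $\Pi^{(m)}_{n+1}$ are obtained from $\pi$ by either adding $n+1$ as a singleton block or adding $n+1$ to an existing block of $\pi$: namely the partition obtained by adding $\{n+1\}$ as a singleton, and, for each $1\le l\le a_m-1$, the partition obtained by adding $n+1$ to block $l$ of $\pi$. Their labels are: \begin{itemize} \item adding $n+1$ as a singleton: $(a_1+1,a_2+1,\dots,a_m+1)$; \item adding $n+1$ to block $l$ with $1\le l\le a_1-1$: $(l+1,a_2,a_3,\dots,a_m)$; \item adding $n+1$ to block $l$ with $a_{j-1}\le l\le a_j-1$ for some $2\le j\le m$: $(a_1+1,\dots,a_{j-1}+1,\,l+1,\,a_{j+1},\dots,a_m)$. \end{itemize} (In particular, block $a_1$ gives $(a_1+1,a_1+1,a_3,\dots,a_m)$, block $a_2$ gives $(a_1+1,a_2+1,a_2+1,a_4,\dots,a_m)$, and block $a_m-1$ gives $(a_1+1,\dots,a_{m-1}+1,a_m)$.)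
   Context: A set partition of $[n]=\{1,\dots,n\}$ is a collection of nonempty pairwise disjoint blocks with union $[n]$ ($n=0$ gives the empty partition). Its standard representation is the graph on vertex set $[n]$ whose edges (arcs) $(i,j)$, $i<j$, join consecutive elements (in numerical order) of each block. An $m$-nesting is a set of $m$ arcs $(i_1,j_1),\dots,(i_m,j_m)$ with $i_1<i_2<\dots<i_m<j_m<j_{m-1}<\dots<j_1$ (a $1$-nesting is a single arc); a partition is $m$-nonnesting if it has no $m$-nesting. $\Pi^{(m)}_n$ denotes the set of partitions of $[n]$ with no $(m+1)$-nesting. The blocks of a partition are numbered $1,2,3,\dots$ in decreasing order of their maximal elements (block 1 contains the largest element). "Adding $n+1$ to block $l$" means forming the partition of $[n+1]$ in which block $l$ is replaced by block $l\cup\{n+1\}$. The label of $\pi\in\Pi^{(m)}_n$ is $L(\pi)=(a_1,\dots,a_m)$ where, for $1\le j\le m$, $a_j=1+$(number of blocks of $\pi$) if $\pi$ has no $j$-nesting, and otherwise $a_j=1+$(number of blocks whose maximal element lies to the right of (is greater than) the smallest vertex of the rightmost $j$-nesting), the rightmost $j$-nesting being one whose smallest vertex is as large as possible among all $j$-nestings of $\pi$. The empty partition has label $(1,\dots,1)$. *)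

theory Defs
  imports Main "HOL-Library.Disjoint_Sets"
begin

definition is_set_partition :: "nat \<Rightarrow> nat set set \<Rightarrow> bool" where
  "is_set_partition n P \<longleftrightarrow> partition_on {1..n} P"

definition arcs :: "nat set set \<Rightarrow> (nat \<times> nat) set" where
  "arcs P = {(i, j). \<exists>B\<in>P. i \<in> B \<and> j \<in> B \<and> i < j \<and> (\<forall>x\<in>B. \<not> (i < x \<and> x < j))}"

text \<open>P has a k-nesting (i_1,j_1),...,(i_k,j_k) with
i_1 < ... < i_k < j_k < ... < j_1 whose smallest vertex i_1 equals s.
Arcs are indexed 0..k-1 here.\<close>
definition has_nesting_at :: "nat set set \<Rightarrow> nat \<Rightarrow> nat \<Rightarrow> bool" where
  "has_nesting_at P k s \<longleftrightarrow> k \<ge> 1 \<and>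
     (\<exists>a b :: nat \<Rightarrow> nat.
        (\<forall>t<k. (a t, b t) \<in> arcs P) \<and>
        (\<forall>t. Suc t < k \<longrightarrow> a t < a (Suc t) \<and> b (Suc t) < b t) \<and>
        a (k - 1) < b (k - 1) \<and> a 0 = s)"

definition has_nesting :: "nat set set \<Rightarrow> nat \<Rightarrow> bool" where
  "has_nesting P k \<longleftrightarrow> (\<exists>s. has_nesting_at P k s)"

definition Pi_m :: "nat \<Rightarrow> nat \<Rightarrow> nat set set set" where
  "Pi_m m n = {P. is_set_partition n P \<and> \<not> has_nesting P (Suc m)}"

text \<open>Block number l (l \<ge> 1): blocks numbered in decreasing order of their
maximal elements, block 1 containing the largest element.\<close>
definition blk :: "nat set set \<Rightarrow> nat \<Rightarrow> nat set" where
  "blk P l = (THE B. B \<in> P \<and> card {C \<in> P. Max B \<le> Max C} = l)"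

definition add_singleton :: "nat set set \<Rightarrow> nat \<Rightarrow> nat set set" where
  "add_singleton P n = insert {Suc n} P"

definition add_to_block :: "nat set set \<Rightarrow> nat \<Rightarrow> nat \<Rightarrow> nat set set" where
  "add_to_block P n l = insert (insert (Suc n) (blk P l)) (P - {blk P l})"

definition extensions :: "nat set set \<Rightarrow> nat \<Rightarrow> nat set set set" where
  "extensions P n = insert (add_singleton P n)
      {insert (insert (Suc n) B) (P - {B}) | B. B \<in> P}"

definition lab :: "nat set set \<Rightarrow> nat \<Rightarrow> nat" where
  "lab P j = (if \<not> has_nesting P j then 1 + card P
              else 1 + card {B \<in> P. Max B > Max {s. has_nesting_at P j s}})"

end

theory Submission
  imports Defs
begin

text \<open>Adding \<open>n + 1\<close> to a block \<open>B\<close> adds exactly one arc, \<open>(max B, n + 1)\<close>, and it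
encloses every other arc. So a new \<open>j\<close>-nesting must use it as its outermost arc; it then starts
at \<open>max B\<close>, and it exists iff some \<open>(j - 1)\<close>-nesting starts to the right of \<open>max B\<close>,
i.e. iff \<open>a\<^sub>j\<^sub>-\<^sub>1\<close> is at most the number \<open>l\<close> of \<open>B\<close>. Hence the new partition has
no \<open>(m + 1)\<close>-nesting iff \<open>l < a\<^sub>m\<close>; for the \<open>j\<close> with \<open>a\<^sub>j\<^sub>-\<^sub>1 \<le> l\<close> the rightmost
\<open>j\<close>-nesting now starts at the larger of \<open>max B\<close> and its old start, which makes the label entry
\<open>min l a\<^sub>j + 1\<close>, and all other entries are unchanged. A singleton block adds no arc but one
block ending to the right of every vertex, so every entry grows by one.\<close>

lemma partition_on_insert_singleton:
  "partition_on A P \<Longrightarrow> x \<notin> A \<Longrightarrow> partition_on (insert x A) (insert {x} P)"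
  by (auto simp: partition_on_def disjoint_def)

definition extend_block :: "'a set set \<Rightarrow> 'a \<Rightarrow> 'a set \<Rightarrow> 'a set set" where
  "extend_block P x B = insert (insert x B) (P - {B})"

lemma partition_on_extend_block:
  assumes "partition_on A P" "B \<in> P" "x \<notin> A"
  shows "partition_on (insert x A) (extend_block P x B)"
  using assms unfolding partition_on_def disjoint_def extend_block_def by blast

section \<open>Arcs and nestings\<close>

definition block_arcs :: "nat set \<Rightarrow> (nat \<times> nat) set" where
  "block_arcs B = {(i, j). i \<in> B \<and> j \<in> B \<and> i < j \<and> (\<forall>x\<in>B. \<not> (i < x \<and> x < j))}"

lemma arcs_eq_UN_block_arcs: "arcs P = (\<Union>B\<in>P. block_arcs B)"
  unfolding arcs_def block_arcs_def by auto

lemma block_arcs_singleton [simp]: "block_arcs {x} = {}"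
  unfolding block_arcs_def by auto

lemma block_arcs_insert_greater:
  assumes "finite B" "B \<noteq> {}" "\<forall>y\<in>B. y < x"
  shows "block_arcs (insert x B) = insert (Max B, x) (block_arcs B)"
proof -
  have Max: "Max B \<in> B" "\<forall>y\<in>B. y \<le> Max B" using assms(1,2) by auto
  have top: "i = Max B" if "i \<in> B" "\<forall>y\<in>B. \<not> (i < y \<and> y < x)" for i
    using that Max assms(3) by (meson antisym not_le)
  show ?thesis
  proof (intro set_eqI iffI)
    fix p assume "p \<in> block_arcs (insert x B)"
    then obtain i j where p: "p = (i, j)" "i \<in> insert x B" "j \<in> insert x B" "i < j"
      and gap: "\<forall>y\<in>insert x B. \<not> (i < y \<and> y < j)"
      unfolding block_arcs_def by blast
    show "p \<in> insert (Max B, x) (block_arcs B)"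
    proof (cases "j = x")
      case True
      then have "i \<in> B" using p assms(3) by auto
      with gap True have "i = Max B" using top by blast
      then show ?thesis using p True by simp
    next
      case False
      then have "j \<in> B" "i \<in> B" using p assms(3) by auto
      then show ?thesis using p gap unfolding block_arcs_def by auto
    qed
  next
    fix p assume "p \<in> insert (Max B, x) (block_arcs B)"
    then show "p \<in> block_arcs (insert x B)"
      using Max assms(3) unfolding block_arcs_def by (auto simp: not_less)
  qed
qed

lemma arcs_insert_singleton: "arcs (insert {x} P) = arcs P"
  by (simp add: arcs_eq_UN_block_arcs)

lemma arcs_extend_block:
  assumes "B \<in> P" "finite B" "B \<noteq> {}" "\<forall>y\<in>B. y < x"
  shows "arcs (extend_block P x B) = insert (Max B, x) (arcs P)"
proof -
  have "arcs P = block_arcs B \<union> (\<Union>C\<in>P - {B}. block_arcs C)"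
    using assms(1) by (auto simp: arcs_eq_UN_block_arcs)
  then show ?thesis
    using block_arcs_insert_greater[OF assms(2-4)]
    by (auto simp: arcs_eq_UN_block_arcs extend_block_def)
qed

definition nesting_at :: "(nat \<times> nat) set \<Rightarrow> nat \<Rightarrow> nat \<Rightarrow> bool" where
  "nesting_at R k s \<longleftrightarrow> k \<ge> 1 \<and>
     (\<exists>a b :: nat \<Rightarrow> nat.
        (\<forall>t<k. (a t, b t) \<in> R) \<and>
        (\<forall>t. Suc t < k \<longrightarrow> a t < a (Suc t) \<and> b (Suc t) < b t) \<and>
        a (k - 1) < b (k - 1) \<and> a 0 = s)"

lemma has_nesting_at_iff_nesting_at: "has_nesting_at P k s \<longleftrightarrow> nesting_at (arcs P) k s"
  unfolding has_nesting_at_def nesting_at_def by simp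

lemma nesting_at_mono: "nesting_at R k s \<Longrightarrow> R \<subseteq> R' \<Longrightarrow> nesting_at R' k s"
  unfolding nesting_at_def by blast

lemma not_nesting_at_0 [simp]: "\<not> nesting_at R 0 s"
  unfolding nesting_at_def by simp

lemma nesting_at_1_iff: "nesting_at R 1 s \<longleftrightarrow> (\<exists>b. (s, b) \<in> R \<and> s < b)"
  unfolding nesting_at_def by auto

lemma nesting_at_Suc_Suc_iff:
  "nesting_at R (Suc (Suc k)) s \<longleftrightarrow>
     (\<exists>b t. (s, b) \<in> R \<and> s < t \<and> nesting_at {(x, y) \<in> R. y < b} (Suc k) t)"
proof
  assume "nesting_at R (Suc (Suc k)) s"
  then obtain a b where arcs: "\<forall>t<Suc (Suc k). (a t, b t) \<in> R"
    and chain: "\<forall>t. Suc t < Suc (Suc k) \<longrightarrow> a t < a (Suc t) \<and> b (Suc t) < b t"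
    and inner: "a (Suc k) < b (Suc k)" and start: "a 0 = s"
    unfolding nesting_at_def by auto
  have below: "b (Suc t) < b 0" if "t \<le> k" for t
    using that
  proof (induction t)
    case (Suc t)
    then show ?case using chain[rule_format, of "Suc t"] by simp
  qed (use chain in simp)
  have "nesting_at {(x, y) \<in> R. y < b 0} (Suc k) (a 1)"
    unfolding nesting_at_def using arcs chain inner below
    by (intro conjI exI[of _ "\<lambda>t. a (Suc t)"] exI[of _ "\<lambda>t. b (Suc t)"]) auto
  moreover have "s < a 1" using chain start by auto
  ultimately show "\<exists>b t. (s, b) \<in> R \<and> s < t \<and> nesting_at {(x, y) \<in> R. y < b} (Suc k) t"
    using arcs start by force
next
  assume "\<exists>b t. (s, b) \<in> R \<and> s < t \<and> nesting_at {(x, y) \<in> R. y < b} (Suc k) t"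
  then obtain b0 t a b where outer: "(s, b0) \<in> R" "s < t"
    and arcs: "\<forall>u<Suc k. (a u, b u) \<in> R \<and> b u < b0"
    and chain: "\<forall>u. Suc u < Suc k \<longrightarrow> a u < a (Suc u) \<and> b (Suc u) < b u"
    and inner: "a k < b k" and start: "a 0 = t"
    unfolding nesting_at_def by auto
  show "nesting_at R (Suc (Suc k)) s"
    unfolding nesting_at_def using outer arcs chain inner start
    by (intro conjI exI[of _ "case_nat s a"] exI[of _ "case_nat b0 b"]) (auto split: nat.split)
qed

lemma nesting_at_Suc_SucD: "nesting_at R (Suc (Suc k)) s \<Longrightarrow> \<exists>t>s. nesting_at R (Suc k) t"
  unfolding nesting_at_Suc_Suc_iff by (blast intro: nesting_at_mono)

lemma nesting_at_start_arc: "nesting_at R k s \<Longrightarrow> \<exists>b. (s, b) \<in> R"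
  unfolding nesting_at_def by (metis less_le_trans zero_less_one)

lemma nesting_at_insert_outer_arc_iff:
  assumes below: "\<forall>(x, y)\<in>R. y < N" and "M < N"
  shows "nesting_at (insert (M, N) R) k s \<longleftrightarrow>
    nesting_at R k s \<or> (s = M \<and> (k = 1 \<or> (\<exists>t>M. nesting_at R (k - 1) t)))"
proof -
  consider "k = 0" | "k = 1" | k' where "k = Suc (Suc k')"
    by (metis One_nat_def not0_implies_Suc)
  then show ?thesis
  proof cases
    case 3
    have restrict: "{(x, y) \<in> insert (M, N) R. y < b} = {(x, y) \<in> R. y < b}"
      if "(s, b) \<in> insert (M, N) R" for b
      using that below by auto
    have "nesting_at (insert (M, N) R) k s \<longleftrightarrow>
      (\<exists>b t. (s, b) \<in> insert (M, N) R \<and> s < t \<and> nesting_at {(x, y) \<in> R. y < b} (Suc k') t)"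
      unfolding 3 nesting_at_Suc_Suc_iff by (metis (no_types, lifting) restrict)
    also have "\<dots> \<longleftrightarrow>
      (s = M \<and> (\<exists>t>s. nesting_at {(x, y) \<in> R. y < N} (Suc k') t)) \<or> nesting_at R k s"
      unfolding 3 nesting_at_Suc_Suc_iff by blast
    also have "{(x, y) \<in> R. y < N} = R" using below by auto
    finally show ?thesis using 3 by auto
  qed (use assms in \<open>auto simp: nesting_at_1_iff[unfolded One_nat_def]\<close>)
qed

section \<open>Labels in terms of block numbers\<close>

definition nesting_starts :: "nat set set \<Rightarrow> nat \<Rightarrow> nat set" where
  "nesting_starts P j = {s. has_nesting_at P j s}"

definition blocks_ending_after :: "nat set set \<Rightarrow> nat \<Rightarrow> nat" where
  "blocks_ending_after P x = card {C \<in> P. x < Max C}"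

definition block_rank :: "nat set set \<Rightarrow> nat set \<Rightarrow> nat" where
  "block_rank P B = card {C \<in> P. Max B \<le> Max C}"

lemma has_nesting_iff_nesting_starts: "has_nesting P j \<longleftrightarrow> nesting_starts P j \<noteq> {}"
  by (simp add: has_nesting_def nesting_starts_def)

lemma lab_eq_blocks_ending_after:
  "lab P j = (if nesting_starts P j = {} then 1 + card P
              else 1 + blocks_ending_after P (Max (nesting_starts P j)))"
  unfolding lab_def has_nesting_def nesting_starts_def blocks_ending_after_def by auto

lemma lab_pos: "1 \<le> lab P j"
  by (simp add: lab_def)

lemma blk_eq_The_block_rank: "blk P l = (THE B. B \<in> P \<and> block_rank P B = l)"
  unfolding blk_def block_rank_def by simp

lemma nesting_starts_insert_singleton: "nesting_starts (insert {x} P) j = nesting_starts P j"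
  by (simp add: nesting_starts_def has_nesting_at_iff_nesting_at arcs_insert_singleton)

locale nat_partition =
  fixes ground :: "nat set" and P :: "nat set set"
  assumes partition: "partition_on ground P" and finite_ground: "finite ground"
begin

lemma finite_blocks: "finite P"
  using finite_elements[OF finite_ground partition] .

lemma block_subset: "B \<in> P \<Longrightarrow> B \<subseteq> ground"
  using partition_onD1[OF partition] by blast

lemma finite_block: "B \<in> P \<Longrightarrow> finite B"
  using block_subset finite_ground finite_subset by blast

lemma block_nonempty: "B \<in> P \<Longrightarrow> B \<noteq> {}"
  using partition_onD3[OF partition] by blast

lemma blocks_eq_if_common: "B \<in> P \<Longrightarrow> C \<in> P \<Longrightarrow> x \<in> B \<Longrightarrow> x \<in> C \<Longrightarrow> B = C"
  using partition_onD2[OF partition] unfolding disjoint_def by blast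

lemma Max_block_in: "B \<in> P \<Longrightarrow> Max B \<in> B"
  using finite_block block_nonempty by simp

lemma Max_block_inj: "B \<in> P \<Longrightarrow> C \<in> P \<Longrightarrow> Max B = Max C \<Longrightarrow> B = C"
  using Max_block_in blocks_eq_if_common by metis

lemma nesting_start_in_block:
  assumes "s \<in> nesting_starts P j" shows "\<exists>B\<in>P. s \<in> B \<and> s < Max B"
proof -
  obtain b where "(s, b) \<in> arcs P"
    using assms nesting_at_start_arc by (fastforce simp: nesting_starts_def has_nesting_at_iff_nesting_at)
  then obtain B where "B \<in> P" "s \<in> B" "b \<in> B" "s < b"
    unfolding arcs_def by blast
  then show ?thesis using finite_block by (meson Max_ge less_le_trans)
qed

lemma finite_nesting_starts: "finite (nesting_starts P j)"
proof (rule finite_subset)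
  show "nesting_starts P j \<subseteq> ground"
    using nesting_start_in_block block_subset by blast
qed (rule finite_ground)

lemma nesting_start_ne_Max_block: "s \<in> nesting_starts P j \<Longrightarrow> C \<in> P \<Longrightarrow> s \<noteq> Max C"
  using nesting_start_in_block Max_block_in blocks_eq_if_common by (metis less_irrefl)

lemma nesting_starts_Suc_SucD:
  "s \<in> nesting_starts P (Suc (Suc k)) \<Longrightarrow> \<exists>t>s. t \<in> nesting_starts P (Suc k)"
  unfolding nesting_starts_def has_nesting_at_iff_nesting_at using nesting_at_Suc_SucD by simp

lemma block_rank_pos: "B \<in> P \<Longrightarrow> 0 < block_rank P B"
  unfolding block_rank_def using finite_blocks by (auto simp: card_gt_0_iff)

lemma block_rank_le_card: "block_rank P B \<le> card P"
  unfolding block_rank_def using finite_blocks by (simp add: card_mono)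

lemma block_rank_less: "B \<in> P \<Longrightarrow> C \<in> P \<Longrightarrow> Max B < Max C \<Longrightarrow> block_rank P C < block_rank P B"
  unfolding block_rank_def using finite_blocks by (intro psubset_card_mono) force+

lemma inj_on_block_rank: "inj_on (block_rank P) P"
  by (rule inj_onI) (metis Max_block_inj block_rank_less linorder_neqE_nat less_irrefl)

lemma block_rank_image: "block_rank P ` P = {1..card P}"
proof (rule card_subset_eq)
  show "block_rank P ` P \<subseteq> {1..card P}"
    using block_rank_pos block_rank_le_card by (auto simp: Suc_le_eq)
  show "card (block_rank P ` P) = card {1..card P}"
    using card_image[OF inj_on_block_rank] by simp
qed simp

lemma blk_block_rank: "B \<in> P \<Longrightarrow> blk P (block_rank P B) = B"
  unfolding blk_eq_The_block_rank by (rule the_equality) (auto dest: inj_onD[OF inj_on_block_rank])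

lemma blk_in_blocks:
  assumes "1 \<le> l" "l \<le> card P"
  shows "blk P l \<in> P" "block_rank P (blk P l) = l"
proof -
  obtain B where "B \<in> P" "l = block_rank P B"
    using assms block_rank_image by (metis atLeastAtMost_iff imageE)
  then show "blk P l \<in> P" "block_rank P (blk P l) = l" using blk_block_rank by auto
qed

lemma blk_image:
  assumes "a \<le> card P + 1" shows "blk P ` {1..<a} = {B \<in> P. block_rank P B < a}"
proof
  show "blk P ` {1..<a} \<subseteq> {B \<in> P. block_rank P B < a}"
    using blk_in_blocks assms by auto
  show "{B \<in> P. block_rank P B < a} \<subseteq> blk P ` {1..<a}"
  proof
    fix B assume "B \<in> {B \<in> P. block_rank P B < a}"
    then show "B \<in> blk P ` {1..<a}"
      using blk_block_rank block_rank_pos by (intro image_eqI[of _ _ "block_rank P B"]) (auto simp: Suc_le_eq)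
  qed
qed

lemma blocks_ending_after_Max: "B \<in> P \<Longrightarrow> blocks_ending_after P (Max B) = block_rank P B - 1"
proof -
  assume "B \<in> P"
  then have "{C \<in> P. Max B < Max C} = {C \<in> P. Max B \<le> Max C} - {B}"
    using Max_block_inj by force
  then show ?thesis
    unfolding blocks_ending_after_def block_rank_def using \<open>B \<in> P\<close> finite_blocks
    by (simp add: card_Diff_singleton)
qed

lemma block_rank_le_blocks_ending_after_iff:
  assumes "B \<in> P" "\<forall>C\<in>P. x \<noteq> Max C"
  shows "block_rank P B \<le> blocks_ending_after P x \<longleftrightarrow> x < Max B"
proof
  assume "x < Max B"
  then have "{C \<in> P. Max B \<le> Max C} \<subseteq> {C \<in> P. x < Max C}" by auto
  then show "block_rank P B \<le> blocks_ending_after P x"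
    unfolding block_rank_def blocks_ending_after_def using finite_blocks by (simp add: card_mono)
next
  assume le: "block_rank P B \<le> blocks_ending_after P x"
  show "x < Max B"
  proof (rule ccontr)
    assume "\<not> x < Max B"
    then have "Max B < x" using assms by (metis linorder_neqE_nat)
    then have "{C \<in> P. x < Max C} \<subseteq> {C \<in> P. Max B < Max C}" by auto
    then have "blocks_ending_after P x \<le> blocks_ending_after P (Max B)"
      unfolding blocks_ending_after_def using finite_blocks by (simp add: card_mono)
    then show False
      using le blocks_ending_after_Max[OF assms(1)] block_rank_pos[OF assms(1)] by linarith
  qed
qed

lemma blocks_ending_after_le_card: "blocks_ending_after P x \<le> card P"
  unfolding blocks_ending_after_def using finite_blocks by (simp add: card_mono)

lemma blocks_ending_after_antimono: "x \<le> y \<Longrightarrow> blocks_ending_after P y \<le> blocks_ending_after P x"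
  unfolding blocks_ending_after_def using finite_blocks by (intro card_mono) auto

lemma lab_le_Suc_card: "lab P j \<le> card P + 1"
  using blocks_ending_after_le_card by (simp add: lab_eq_blocks_ending_after)

lemma lab_le_lab_Suc: "lab P (Suc k) \<le> lab P (Suc (Suc k))"
proof (cases "nesting_starts P (Suc (Suc k)) = {}")
  case True
  then show ?thesis using lab_le_Suc_card by (simp add: lab_eq_blocks_ending_after[of P "Suc (Suc k)"])
next
  case False
  define s where "s = Max (nesting_starts P (Suc (Suc k)))"
  have "s \<in> nesting_starts P (Suc (Suc k))" using False finite_nesting_starts s_def by simp
  then obtain t where t: "s < t" "t \<in> nesting_starts P (Suc k)" using nesting_starts_Suc_SucD by blast
  then have "s \<le> Max (nesting_starts P (Suc k))" using finite_nesting_starts by (meson Max_ge less_le_trans less_imp_le)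
  then show ?thesis using False t blocks_ending_after_antimono by (auto simp: lab_eq_blocks_ending_after s_def)
qed

lemma lab_mono:
  assumes "1 \<le> i" "i \<le> j" shows "lab P i \<le> lab P j"
  using assms(2)
proof (induction j rule: dec_induct)
  case (step k)
  then show ?case using lab_le_lab_Suc[of "k - 1"] assms(1) by simp
qed simp

lemma later_nesting_start_iff:
  assumes "B \<in> P"
  shows "(\<exists>t>Max B. t \<in> nesting_starts P j) \<longleftrightarrow> lab P j \<le> block_rank P B"
proof (cases "nesting_starts P j = {}")
  case True
  then show ?thesis using block_rank_le_card[of B] by (simp add: lab_eq_blocks_ending_after)
next
  case False
  define s where "s = Max (nesting_starts P j)"
  have s: "s \<in> nesting_starts P j" using False finite_nesting_starts s_def by simp
  have "(\<exists>t>Max B. t \<in> nesting_starts P j) \<longleftrightarrow> Max B < s"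
    using s finite_nesting_starts s_def by (meson Max_ge less_le_trans)
  also have "\<dots> \<longleftrightarrow> \<not> s < Max B"
    using nesting_start_ne_Max_block[OF s assms] by auto
  also have "\<dots> \<longleftrightarrow> \<not> block_rank P B \<le> blocks_ending_after P s"
    using block_rank_le_blocks_ending_after_iff[OF assms] nesting_start_ne_Max_block[OF s] by blast
  also have "\<dots> \<longleftrightarrow> lab P j \<le> block_rank P B"
    using False by (simp add: lab_eq_blocks_ending_after s_def not_le Suc_le_eq)
  finally show ?thesis .
qed

end

section \<open>Labels of the extensions\<close>

locale nat_partition_extension = nat_partition +
  fixes x :: nat
  assumes greater: "\<forall>y\<in>ground. y < x"
begin

lemma notin_ground: "x \<notin> ground"
  using greater by blast

lemma Max_block_less: "B \<in> P \<Longrightarrow> Max B < x"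
  using Max_block_in block_subset greater by blast

lemma nesting_start_less: "s \<in> nesting_starts P j \<Longrightarrow> s < x"
  using nesting_start_in_block block_subset greater by blast

lemma singleton_notin_blocks: "{x} \<notin> P"
  using block_subset notin_ground by blast

lemma card_insert_singleton: "card (insert {x} P) = card P + 1"
  using singleton_notin_blocks finite_blocks by simp

lemma blocks_ending_after_insert_singleton:
  "y < x \<Longrightarrow> blocks_ending_after (insert {x} P) y = blocks_ending_after P y + 1"
proof -
  assume "y < x"
  then have "{C \<in> insert {x} P. y < Max C} = insert {x} {C \<in> P. y < Max C}" by auto
  then show ?thesis
    unfolding blocks_ending_after_def using singleton_notin_blocks finite_blocks by simp
qed

lemma lab_insert_singleton: "lab (insert {x} P) j = lab P j + 1"
  using finite_nesting_starts nesting_start_less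
  by (simp add: lab_eq_blocks_ending_after nesting_starts_insert_singleton
      card_insert_singleton blocks_ending_after_insert_singleton)

context
  fixes B assumes block: "B \<in> P"
begin

lemma extended_block_notin_blocks: "insert x B \<notin> P"
  using block_subset notin_ground by blast

lemma nesting_starts_extend_block:
  assumes "1 \<le> j"
  shows "nesting_starts (extend_block P x B) j =
    (if j = 1 \<or> lab P (j - 1) \<le> block_rank P B
     then insert (Max B) (nesting_starts P j) else nesting_starts P j)"
proof -
  have "\<forall>(u, v)\<in>arcs P. v < x"
    using block_subset greater unfolding arcs_def by blast
  then have "s \<in> nesting_starts (extend_block P x B) j \<longleftrightarrow>
    s \<in> nesting_starts P j \<or> (s = Max B \<and> (j = 1 \<or> (\<exists>t>Max B. t \<in> nesting_starts P (j - 1))))"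
    for s
    using assms Max_block_less[OF block]
    by (simp add: nesting_starts_def has_nesting_at_iff_nesting_at nesting_at_insert_outer_arc_iff
        arcs_extend_block block finite_block block_nonempty)
  then show ?thesis
    using later_nesting_start_iff[OF block] by auto
qed

lemma card_extend_block: "card (extend_block P x B) = card P"
  unfolding extend_block_def
  using extended_block_notin_blocks finite_blocks block
  by (simp add: card_Diff_singleton) (metis Suc_pred card_gt_0_iff empty_iff)

lemma blocks_ending_after_extend_block:
  assumes "y < x"
  shows "blocks_ending_after (extend_block P x B) y =
    (if y < Max B then blocks_ending_after P y else blocks_ending_after P y + 1)"
proof -
  have "Max (insert x B) = x"
    using finite_block[OF block] block_nonempty[OF block] Max_block_less[OF block] by simp
  then have "{C \<in> extend_block P x B. y < Max C} = insert (insert x B) ({C \<in> P. y < Max C} - {B})"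
    unfolding extend_block_def using assms by auto
  moreover have "card ({C \<in> P. y < Max C} - {B}) =
    (if y < Max B then card {C \<in> P. y < Max C} - 1 else card {C \<in> P. y < Max C})"
    using block finite_blocks by (simp add: card_Diff_singleton_if)
  moreover have "y < Max B \<Longrightarrow> 0 < card {C \<in> P. y < Max C}"
    using block finite_blocks by (auto simp: card_gt_0_iff)
  ultimately show ?thesis
    unfolding blocks_ending_after_def using extended_block_notin_blocks finite_blocks by auto
qed

lemma blocks_ending_after_extend_block_Max: "blocks_ending_after (extend_block P x B) (Max B) = block_rank P B"
  using blocks_ending_after_extend_block[OF Max_block_less[OF block]]
    blocks_ending_after_Max[OF block] block_rank_pos[OF block] by simp

lemma lab_extend_block_unaffected:
  assumes "2 \<le> j" "\<not> lab P (j - 1) \<le> block_rank P B"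
  shows "lab (extend_block P x B) j = lab P j"
proof (cases "nesting_starts P j = {}")
  case True
  then show ?thesis
    using assms by (simp add: lab_eq_blocks_ending_after nesting_starts_extend_block card_extend_block)
next
  case False
  define s where "s = Max (nesting_starts P j)"
  have s: "s \<in> nesting_starts P j" using False finite_nesting_starts s_def by simp
  obtain t where "s < t" "t \<in> nesting_starts P (j - 1)"
    using nesting_starts_Suc_SucD[of s "j - 2"] s assms(1) by (auto simp: numeral_2_eq_2 Suc_diff_Suc)
  moreover have "\<not> (\<exists>t>Max B. t \<in> nesting_starts P (j - 1))"
    using later_nesting_start_iff[OF block] assms(2) by blast
  ultimately have "s < Max B" by (meson le_less_trans not_le)
  then show ?thesis
    using assms False nesting_start_less[OF s]
    by (simp add: lab_eq_blocks_ending_after nesting_starts_extend_block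
        blocks_ending_after_extend_block s_def[symmetric])
qed

lemma lab_extend_block_affected:
  assumes "1 \<le> j" "j = 1 \<or> lab P (j - 1) \<le> block_rank P B"
  shows "lab (extend_block P x B) j = min (block_rank P B) (lab P j) + 1"
proof -
  have starts: "nesting_starts (extend_block P x B) j = insert (Max B) (nesting_starts P j)"
    using nesting_starts_extend_block assms by simp
  show ?thesis
  proof (cases "nesting_starts P j = {}")
    case True
    then show ?thesis
      using block_rank_le_card[of B]
      by (simp add: lab_eq_blocks_ending_after starts blocks_ending_after_extend_block_Max)
  next
    case False
    define s where "s = Max (nesting_starts P j)"
    have s: "s \<in> nesting_starts P j" using False finite_nesting_starts s_def by simp
    have lab_P: "lab P j = 1 + blocks_ending_after P s"
      using False by (simp add: lab_eq_blocks_ending_after s_def)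
    have Max_starts: "Max (insert (Max B) (nesting_starts P j)) = max (Max B) s"
      using False finite_nesting_starts s_def by simp
    have rank_iff: "block_rank P B \<le> blocks_ending_after P s \<longleftrightarrow> s < Max B"
      using block_rank_le_blocks_ending_after_iff[OF block] nesting_start_ne_Max_block[OF s] by blast
    consider "s < Max B" | "Max B < s"
      using nesting_start_ne_Max_block[OF s block] by linarith
    then show ?thesis
    proof cases
      case 1
      then show ?thesis
        using rank_iff lab_P Max_starts
        by (simp add: lab_eq_blocks_ending_after starts blocks_ending_after_extend_block_Max)
    next
      case 2
      then show ?thesis
        using rank_iff lab_P Max_starts nesting_start_less[OF s]
        by (simp add: lab_eq_blocks_ending_after starts blocks_ending_after_extend_block)
    qed
  qed
qed

lemma has_nesting_extend_block_iff:
  assumes "1 \<le> m"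
  shows "has_nesting (extend_block P x B) (Suc m) \<longleftrightarrow>
    has_nesting P (Suc m) \<or> lab P m \<le> block_rank P B"
  using assms by (simp add: has_nesting_iff_nesting_starts nesting_starts_extend_block)

end

lemma notin_block: "B \<in> P \<Longrightarrow> x \<notin> B"
  using block_subset notin_ground by blast

lemma extend_block_inj:
  assumes "B \<in> P" "C \<in> P" "extend_block P x B = extend_block P x C"
  shows "B = C"
proof -
  have "insert x B \<in> extend_block P x B"
    by (simp add: extend_block_def)
  then have "insert x B \<in> extend_block P x C"
    using assms(3) by simp
  then have "insert x B = insert x C"
    using extended_block_notin_blocks[OF assms(1)] unfolding extend_block_def by blast
  then show ?thesis
    using notin_block assms(1,2) by (simp add: insert_ident)
qed

lemma extend_block_ne_insert_singleton:
  assumes "B \<in> P" shows "extend_block P x B \<noteq> insert {x} P"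
proof
  assume "extend_block P x B = insert {x} P"
  moreover have "insert x B \<in> extend_block P x B"
    by (simp add: extend_block_def)
  ultimately have "insert x B \<in> insert {x} P"
    by simp
  then have "B \<subseteq> {x}"
    using extended_block_notin_blocks[OF assms] by blast
  then show False
    using notin_block[OF assms] block_nonempty[OF assms] by auto
qed

lemma partition_on_extensions:
  "Q \<in> insert (insert {x} P) (extend_block P x ` P) \<Longrightarrow> partition_on (insert x ground) Q"
  using partition_on_insert_singleton[OF partition notin_ground]
    partition_on_extend_block[OF partition _ notin_ground] by auto

lemma nonnesting_extensions:
  assumes "1 \<le> m" "\<not> has_nesting P (Suc m)"
  shows "{Q \<in> insert (insert {x} P) (extend_block P x ` P). \<not> has_nesting Q (Suc m)} =
    insert (insert {x} P) ((\<lambda>l. extend_block P x (blk P l)) ` {1..<lab P m})"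
proof -
  have "\<not> has_nesting (insert {x} P) (Suc m)"
    using assms(2) by (simp add: has_nesting_iff_nesting_starts nesting_starts_insert_singleton)
  then have "{Q \<in> insert (insert {x} P) (extend_block P x ` P). \<not> has_nesting Q (Suc m)} =
    insert (insert {x} P) (extend_block P x ` {B \<in> P. \<not> has_nesting (extend_block P x B) (Suc m)})"
    by blast
  also have "{B \<in> P. \<not> has_nesting (extend_block P x B) (Suc m)} = blk P ` {1..<lab P m}"
    using has_nesting_extend_block_iff assms blk_image[OF lab_le_Suc_card] by auto
  finally show ?thesis by (simp add: image_image)
qed

lemma card_nonnesting_extensions:
  assumes "1 \<le> a" "a \<le> card P + 1"
  shows "card (insert (insert {x} P) ((\<lambda>l. extend_block P x (blk P l)) ` {1..<a})) = a"
proof -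
  have blk: "blk P l \<in> P" "block_rank P (blk P l) = l" if "l \<in> {1..<a}" for l
    using that assms(2) blk_in_blocks by auto
  have "inj_on (\<lambda>l. extend_block P x (blk P l)) {1..<a}"
  proof (rule inj_onI)
    fix k l assume "k \<in> {1..<a}" "l \<in> {1..<a}"
      and "extend_block P x (blk P k) = extend_block P x (blk P l)"
    then have "blk P k = blk P l"
      using blk(1) by (intro extend_block_inj)
    then show "k = l"
      using blk(2) \<open>k \<in> {1..<a}\<close> \<open>l \<in> {1..<a}\<close> by metis
  qed
  moreover have "insert {x} P \<notin> (\<lambda>l. extend_block P x (blk P l)) ` {1..<a}"
    using blk(1) extend_block_ne_insert_singleton by force
  ultimately show ?thesis
    using assms(1) by (simp add: card_image)
qed

text \<open>The condition on \<open>l\<close> reads \<open>a\<^sub>j\<^sub>-\<^sub>1 \<le> l\<close> with \<open>a\<^sub>0 = 1\<close>; note that \<open>lab P 0\<close> is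
\<open>card P + 1\<close>, not 1.\<close>

lemma lab_extend_block_blk:
  assumes "1 \<le> j" "(if j = 1 then 1 else lab P (j - 1)) \<le> l" "l < lab P j" "1 \<le> i"
  shows "lab (extend_block P x (blk P l)) i =
    (if i < j then lab P i + 1 else if i = j then l + 1 else lab P i)"
proof -
  have "1 \<le> l" using assms(2) lab_pos[of P "j - 1"] by (auto split: if_splits)
  moreover have "l \<le> card P" using assms(3) lab_le_Suc_card[of j] by simp
  ultimately have B: "blk P l \<in> P" "block_rank P (blk P l) = l" using blk_in_blocks by auto
  have below_l: "j = 1 \<or> lab P (j - 1) \<le> l" using assms(2) by (auto split: if_splits)
  consider "i < j" | "i = j" | "j < i" by linarith
  then show ?thesis
  proof cases
    case 1
    then have "lab P i \<le> lab P (j - 1)" using assms(4) lab_mono by simp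
    then have "lab P i \<le> l" using 1 assms(4) below_l by auto
    moreover have "i = 1 \<or> lab P (i - 1) \<le> lab P i"
      using assms(4) lab_mono[of "i - 1" i] by (cases "i = 1") auto
    ultimately show ?thesis using 1 B assms(4) by (auto simp: lab_extend_block_affected)
  next
    case 2
    then show ?thesis using B below_l assms by (simp add: lab_extend_block_affected)
  next
    case 3
    then have "lab P j \<le> lab P (i - 1)" using assms(1) lab_mono by simp
    then show ?thesis using 3 B assms by (simp add: lab_extend_block_unaffected)
  qed
qed

end

lemma set_partition_extension: "is_set_partition n P \<Longrightarrow> nat_partition_extension {1..n} P (Suc n)"
  unfolding is_set_partition_def by unfold_locales auto

lemma extensions_eq: "extensions P n = insert (add_singleton P n) (extend_block P (Suc n) ` P)"
  unfolding extensions_def extend_block_def by auto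

lemma add_to_block_eq: "add_to_block P n = (\<lambda>l. extend_block P (Suc n) (blk P l))"
  by (simp add: fun_eq_iff add_to_block_def extend_block_def)

lemma Pi_m_Suc_extension_iff:
  assumes "is_set_partition n P" "Q \<in> extensions P n"
  shows "Q \<in> Pi_m m (Suc n) \<longleftrightarrow> \<not> has_nesting Q (Suc m)"
proof -
  interpret nat_partition_extension "{1..n}" P "Suc n"
    using set_partition_extension[OF assms(1)] .
  show ?thesis
    using partition_on_extensions assms(2)
    by (auto simp: Pi_m_def is_set_partition_def extensions_eq add_singleton_def atLeastAtMostSuc_conv)
qed

theorem proposition1:
  fixes m n :: nat and P :: "nat set set"
  assumes "m \<ge> 1" and "P \<in> Pi_m m n"
  defines "a \<equiv> lab P"
  shows "{Q \<in> extensions P n. Q \<in> Pi_m m (Suc n)}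
           = insert (add_singleton P n) (add_to_block P n ` {1..<a m}) \<and>
         card {Q \<in> extensions P n. Q \<in> Pi_m m (Suc n)} = a m \<and>
         (\<forall>j\<in>{1..m}. lab (add_singleton P n) j = a j + 1) \<and>
         (\<forall>l. 1 \<le> l \<and> l < a 1 \<longrightarrow>
           lab (add_to_block P n l) 1 = l + 1 \<and>
           (\<forall>i\<in>{2..m}. lab (add_to_block P n l) i = a i)) \<and>
         (\<forall>j\<in>{2..m}. \<forall>l. a (j - 1) \<le> l \<and> l < a j \<longrightarrow>
           (\<forall>i\<in>{1..m}. lab (add_to_block P n l) i =
              (if i < j then a i + 1 else if i = j then l + 1 else a i)))"
proof -
  have set_partition: "is_set_partition n P" and nonnesting: "\<not> has_nesting P (Suc m)"
    using assms(2) by (auto simp: Pi_m_def)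
  interpret nat_partition_extension "{1..n}" P "Suc n"
    using set_partition_extension[OF set_partition] .
  have "{Q \<in> extensions P n. Q \<in> Pi_m m (Suc n)} = {Q \<in> extensions P n. \<not> has_nesting Q (Suc m)}"
    using Pi_m_Suc_extension_iff[OF set_partition] by blast
  also have "\<dots> = insert (add_singleton P n) (add_to_block P n ` {1..<a m})"
    unfolding extensions_eq add_singleton_def add_to_block_eq a_def
    using nonnesting_extensions[OF assms(1) nonnesting] .
  finally have admissible: "{Q \<in> extensions P n. Q \<in> Pi_m m (Suc n)} =
      insert (add_singleton P n) (add_to_block P n ` {1..<a m})" .
  moreover have "card {Q \<in> extensions P n. Q \<in> Pi_m m (Suc n)} = a m"
    unfolding admissible a_def add_singleton_def add_to_block_eq
    using card_nonnesting_extensions lab_pos lab_le_Suc_card by simp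
  moreover have "\<forall>j\<in>{1..m}. lab (add_singleton P n) j = a j + 1"
    by (simp add: lab_insert_singleton a_def add_singleton_def)
  moreover have "\<forall>l. 1 \<le> l \<and> l < a 1 \<longrightarrow> lab (add_to_block P n l) 1 = l + 1 \<and>
      (\<forall>i\<in>{2..m}. lab (add_to_block P n l) i = a i)"
    using lab_extend_block_blk[of 1] by (simp add: a_def add_to_block_eq)
  moreover have "\<forall>j\<in>{2..m}. \<forall>l. a (j - 1) \<le> l \<and> l < a j \<longrightarrow>
      (\<forall>i\<in>{1..m}. lab (add_to_block P n l) i = (if i < j then a i + 1 else if i = j then l + 1 else a i))"
  proof (intro ballI allI impI)
    fix j l i assume "j \<in> {2..m}" "a (j - 1) \<le> l \<and> l < a j" "i \<in> {1..m}"
    then show "lab (add_to_block P n l) i = (if i < j then a i + 1 else if i = j then l + 1 else a i)"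
      using lab_extend_block_blk[of j l i] by (simp add: a_def add_to_block_eq)
  qed
  ultimately show ?thesis by (intro conjI)
qed

end
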